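(* Let $X$ be a real Banach space having a strong atom $u\in S_X$ which is also a big point. Then $X$ is isometrically isomorphic to $\ell^1(\Gamma)$ for some set $\Gamma$.
   Context: $\mathcal{G}_X$ is the group of surjective linear isometries (rotations) of $X$; $u\in S_X$ is a big point if $\overline{\mathrm{conv}}(\{T(u):T\in\mathcal{G}_X\})=B_X$. For a closed subspace $Y\subset X$, a continuous linear surjective projection $P: X\to Y$ is an isometric reflection projection if $I-2P\in\mathcal{G}_X$; $Y$ is then an isometric reflection subspace. A point $u\in S_X$ is a strong atom if (1) the one-dimensional subspace $[u]$ is an isometric reflection subspace, and (2) for every closed subspace $Y\subset X$ and every isometric reflection projection $P:X\to Y$, either $P(u)=u$ or $P(u)=0$. *)

theory Defs
  imports "HOL-Analysis.Analysis"
begin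

definition rotation :: "('a::real_normed_vector \<Rightarrow> 'a) \<Rightarrow> bool" where
  "rotation T \<longleftrightarrow> linear T \<and> surj T \<and> (\<forall>x. norm (T x) = norm x)"

definition big_point :: "'a::real_normed_vector \<Rightarrow> bool" where
  "big_point u \<longleftrightarrow> norm u = 1 \<and>
     closure (convex hull {T u | T. rotation T}) = cball 0 1"

definition isometric_reflection_projection ::
  "('a::real_normed_vector \<Rightarrow> 'a) \<Rightarrow> 'a set \<Rightarrow> bool" where
  "isometric_reflection_projection P Y \<longleftrightarrow>
     closed Y \<and> subspace Y \<and> bounded_linear P \<and> range P = Y \<and>
     (\<forall>x. P (P x) = P x) \<and> rotation (\<lambda>x. x - 2 *\<^sub>R P x)"

definition isometric_reflection_subspace :: "'a::real_normed_vector set \<Rightarrow> bool" where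
  "isometric_reflection_subspace Y \<longleftrightarrow> (\<exists>P. isometric_reflection_projection P Y)"

definition strong_atom :: "'a::real_normed_vector \<Rightarrow> bool" where
  "strong_atom u \<longleftrightarrow> norm u = 1 \<and>
     isometric_reflection_subspace (span {u}) \<and>
     (\<forall>Y P. isometric_reflection_projection P Y \<longrightarrow> P u = u \<or> P u = 0)"

definition l1_space :: "'g set \<Rightarrow> ('g \<Rightarrow> real) set" where
  "l1_space \<Gamma> = {f. (\<lambda>i. \<bar>f i\<bar>) summable_on \<Gamma> \<and> (\<forall>i. i \<notin> \<Gamma> \<longrightarrow> f i = 0)}"

definition l1_norm :: "'g set \<Rightarrow> ('g \<Rightarrow> real) \<Rightarrow> real" where
  "l1_norm \<Gamma> f = (\<Sum>\<^sub>\<infinity>i\<in>\<Gamma>. \<bar>f i\<bar>)"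

definition isometrically_isomorphic_l1 :: "'a::real_normed_vector itself \<Rightarrow> 'g set \<Rightarrow> bool" where
  "isometrically_isomorphic_l1 _ \<Gamma> \<longleftrightarrow>
     (\<exists>T :: 'a \<Rightarrow> ('g \<Rightarrow> real).
        (\<forall>x y. T (x + y) = (\<lambda>i. T x i + T y i)) \<and>
        (\<forall>c x. T (c *\<^sub>R x) = (\<lambda>i. c * T x i)) \<and>
        bij_betw T UNIV (l1_space \<Gamma>) \<and>
        (\<forall>x. l1_norm \<Gamma> (T x) = norm x))"

end

theory Submission imports Defs begin

text \<open>
  Let u be a strong atom and a big point, and let P be an isometric
  reflection projection onto span {u}; write P x = coord(x) u.  Conjugating P by a
  rotation S gives another isometric reflection projection, which by the strong
  atom property fixes or kills u; hence S(u) is either a multiple of u or lies in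
  the kernel of coord.  Transporting coord along rotations yields, for every point v
  of the orbit of u, a functional func v of norm at most one with func v v = 1 that
  vanishes on the orbit except at v and -v.  Choosing one point of each antipodal
  pair of the orbit gives a set "half" on which these functionals are biorthogonal.
  Since u is a big point, its orbit is norming and total; this bounds the finite
  coordinate sums by the norm and shows that "half" is total.
\<close>

subsection \<open>Rotations\<close>

lemma rotation_linear: "rotation T \<Longrightarrow> linear T"
  and rotation_norm: "rotation T \<Longrightarrow> norm (T x) = norm x"
  by (auto simp: rotation_def)

lemma rotation_bounded_linear: "rotation T \<Longrightarrow> bounded_linear T"
  by (rule bounded_linear_intro[where K=1])
     (auto simp: linear_add linear_scale rotation_linear rotation_norm)

lemma rotation_inj: assumes "rotation T" shows "inj T"
proof (rule injI)
  fix x y assume "T x = T y"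
  then have "T (x - y) = 0" by (simp add: linear_diff[OF rotation_linear[OF assms]])
  then have "norm (x - y) = 0" using rotation_norm[OF assms, of "x - y"] by simp
  then show "x = y" by simp
qed

lemma rotation_inv_right: "rotation T \<Longrightarrow> T (inv T x) = x"
  by (simp add: rotation_def surj_f_inv_f)

lemma rotation_inv_left: "rotation T \<Longrightarrow> inv T (T x) = x"
  by (simp add: rotation_inj)

lemma rotation_inv: assumes T: "rotation T" shows "rotation (inv T)"
proof -
  have "linear (inv T)"
    by (rule linearI; rule injD[OF rotation_inj[OF T]])
       (simp_all add: linear_add linear_scale rotation_linear[OF T] rotation_inv_right[OF T])
  moreover have "surj (inv T)" by (simp add: inj_imp_surj_inv rotation_inj[OF T])
  moreover have "norm (inv T x) = norm x" for x
    using rotation_norm[OF T, of "inv T x"] by (simp add: rotation_inv_right[OF T])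
  ultimately show ?thesis by (simp add: rotation_def)
qed

lemma rotation_comp:
  assumes "rotation S" "rotation T" shows "rotation (\<lambda>x. S (T x))"
proof -
  have "linear (\<lambda>x. S (T x))" using assms linear_compose[of T S] by (auto simp: rotation_def o_def)
  moreover have "surj (\<lambda>x. S (T x))"
    by (rule surjI[of _ "\<lambda>y. inv T (inv S y)"]) (simp add: rotation_inv_right assms)
  ultimately show ?thesis using assms by (simp add: rotation_def)
qed

lemma rotation_uminus: assumes "rotation T" shows "rotation (\<lambda>x. - T x)"
proof -
  have "linear (\<lambda>x. - T x)" by (simp add: linear_compose_neg rotation_linear[OF assms])
  moreover have "surj (\<lambda>x. - T x)"
    by (rule surjI[of _ "\<lambda>y. inv T (- y)"]) (simp add: rotation_inv_right[OF assms])
  ultimately show ?thesis using assms by (simp add: rotation_def)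
qed

subsection \<open>Isometric reflection projections\<close>

text \<open>Since 2P = I - (I - 2P) with I - 2P an isometry, an isometric reflection
  projection has norm at most one.\<close>

lemma isometric_reflection_projection_norm_le:
  assumes "isometric_reflection_projection P Y" shows "norm (P x) \<le> norm x"
proof -
  have refl: "norm (x - 2 *\<^sub>R P x) = norm x"
    using assms by (simp add: isometric_reflection_projection_def rotation_def)
  have "norm (2 *\<^sub>R P x) \<le> norm x + norm (x - 2 *\<^sub>R P x)"
    using norm_triangle_ineq4[of x "x - 2 *\<^sub>R P x"] by simp
  then show ?thesis using refl by simp
qed

lemma isometric_reflection_projection_conj:
  assumes P: "isometric_reflection_projection P Y" and S: "rotation S"
  shows "isometric_reflection_projection (\<lambda>x. inv S (P (S x))) (S -` Y)"
proof -
  have cY: "closed Y" and sY: "subspace Y" and bP: "bounded_linear P" and rP: "range P = Y"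
    and idem: "\<And>x. P (P x) = P x" and R: "rotation (\<lambda>x. x - 2 *\<^sub>R P x)"
    using P by (auto simp: isometric_reflection_projection_def)
  have lS: "linear S" and lSi: "linear (inv S)"
    using rotation_linear[OF S] rotation_linear[OF rotation_inv[OF S]] .
  have "closed (S -` Y)"
    by (rule continuous_closed_vimage[OF cY])
       (simp add: bounded_linear.continuous[OF rotation_bounded_linear[OF S]])
  moreover have "subspace (S -` Y)"
    using sY by (auto simp: subspace_def linear_add[OF lS] linear_scale[OF lS] linear_0[OF lS])
  moreover have "bounded_linear (\<lambda>x. inv S (P (S x)))"
    using bounded_linear_compose[OF rotation_bounded_linear[OF rotation_inv[OF S]]
        bounded_linear_compose[OF bP rotation_bounded_linear[OF S]]] .
  moreover have "range (\<lambda>x. inv S (P (S x))) = S -` Y"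
  proof -
    have surjS: "surj S" and bijS: "bij S"
      using S rotation_inj[OF S] by (simp_all add: rotation_def bij_def)
    have "range (\<lambda>x. inv S (P (S x))) = inv S ` P ` range S"
      by (simp add: image_image)
    also have "\<dots> = inv S ` Y"
      using rP surjS by simp
    also have "\<dots> = S -` Y"
      by (rule bij_vimage_eq_inv_image[OF bijS, symmetric])
    finally show ?thesis .
  qed
  moreover have "inv S (P (S (inv S (P (S x))))) = inv S (P (S x))" for x
    by (simp add: rotation_inv_right[OF S] idem)
  moreover have "rotation (\<lambda>x. x - 2 *\<^sub>R inv S (P (S x)))"
  proof -
    have "(\<lambda>x. x - 2 *\<^sub>R inv S (P (S x))) = (\<lambda>x. inv S ((\<lambda>y. y - 2 *\<^sub>R P y) (S x)))"
      by (simp add: linear_diff[OF lSi] linear_scale[OF lSi] rotation_inv_left[OF S])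
    then show ?thesis using rotation_comp[OF rotation_inv[OF S] rotation_comp[OF R S]] by simp
  qed
  ultimately show ?thesis
    unfolding isometric_reflection_projection_def by (intro conjI allI) assumption+
qed

subsection \<open>Consequences of being a big point\<close>

lemma big_point_cball_subset:
  assumes "big_point u" "closed C" "convex C" "\<And>T. rotation T \<Longrightarrow> T u \<in> C"
  shows "cball 0 1 \<subseteq> C"
proof -
  have "convex hull {T u | T. rotation T} \<subseteq> C"
    using assms(3,4) by (intro hull_minimal) auto
  then have "closure (convex hull {T u | T. rotation T}) \<subseteq> C"
    using assms(2) by (rule closure_minimal)
  then show ?thesis using assms(1) by (simp add: big_point_def)
qed

lemma big_point_functional_bound:
  assumes u: "big_point u" and h: "bounded_linear h"
    and orbit: "\<And>T. rotation T \<Longrightarrow> \<bar>h (T u)\<bar> \<le> 1"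
  shows "\<bar>h x\<bar> \<le> norm x"
proof -
  have lh: "linear h" using h bounded_linear.linear by blast
  let ?C = "h -` cball 0 1"
  have "closed ?C"
    by (rule continuous_closed_vimage) (simp_all add: bounded_linear.continuous[OF h])
  moreover have "convex ?C" by (rule convex_linear_vimage[OF lh convex_cball])
  ultimately have ball: "cball 0 1 \<subseteq> ?C"
    using big_point_cball_subset[OF u] orbit by simp
  show ?thesis
  proof (cases "x = 0")
    case True then show ?thesis by (simp add: linear_0[OF lh])
  next
    case False
    have "(1 / norm x) *\<^sub>R x \<in> cball 0 1" using False by simp
    then have "(1 / norm x) *\<^sub>R x \<in> h -` cball 0 1" using ball by blast
    then have "\<bar>h ((1 / norm x) *\<^sub>R x)\<bar> \<le> 1" by simp
    then show ?thesis using False by (simp add: linear_scale[OF lh] divide_le_eq)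
  qed
qed

lemma big_point_total:
  assumes u: "big_point u" and M: "closed M" "subspace M"
    and orbit: "\<And>T. rotation T \<Longrightarrow> T u \<in> M"
  shows "x \<in> M"
proof -
  have ball: "cball 0 1 \<subseteq> M"
    using big_point_cball_subset[OF u M(1) subspace_imp_convex[OF M(2)]] orbit by blast
  show ?thesis
  proof (cases "x = 0")
    case True then show ?thesis using M(2) by (simp add: subspace_0)
  next
    case False
    then have "(1 / norm x) *\<^sub>R x \<in> M" using ball by auto
    then have "norm x *\<^sub>R ((1 / norm x) *\<^sub>R x) \<in> M" by (rule subspace_scale[OF M(2)])
    then show ?thesis using False by simp
  qed
qed

subsection \<open>An abstract criterion for being isometric to l1(G)\<close>

lemma infsum_single_point:
  fixes g :: "'i \<Rightarrow> 'b::{comm_monoid_add, t2_space}"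
  assumes "w \<in> A" and "\<And>v. v \<in> A \<Longrightarrow> v \<noteq> w \<Longrightarrow> g v = 0"
  shows "infsum g A = g w"
proof -
  have "infsum g A = infsum g {w}"
    by (rule infsum_cong_neutral) (use assms in auto)
  then show ?thesis by simp
qed

locale l1_basis =
  fixes G :: "'a::banach set" and f :: "'a \<Rightarrow> 'a \<Rightarrow> real"
  assumes unit: "v \<in> G \<Longrightarrow> norm v = 1"
    and coordinate_bounded_linear: "v \<in> G \<Longrightarrow> bounded_linear (f v)"
    and biorthogonal: "v \<in> G \<Longrightarrow> w \<in> G \<Longrightarrow> f v w = (if w = v then 1 else 0)"
    and finite_sums_le: "finite F \<Longrightarrow> F \<subseteq> G \<Longrightarrow> (\<Sum>v\<in>F. \<bar>f v x\<bar>) \<le> norm x"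
    and total: "closed M \<Longrightarrow> subspace M \<Longrightarrow> G \<subseteq> M \<Longrightarrow> x \<in> M"
begin

definition coords :: "'a \<Rightarrow> 'a \<Rightarrow> real" where
  "coords x = (\<lambda>v. if v \<in> G then f v x else 0)"

definition synth :: "('a \<Rightarrow> real) \<Rightarrow> 'a" where
  "synth a = (\<Sum>\<^sub>\<infinity>v\<in>G. a v *\<^sub>R v)"

lemma coordinate_linear: "v \<in> G \<Longrightarrow> linear (f v)"
  using coordinate_bounded_linear bounded_linear.linear by blast

lemma abs_coords_summable: "(\<lambda>v. \<bar>f v x\<bar>) summable_on G"
  by (rule nonneg_bdd_above_summable_on) (auto intro!: bdd_aboveI2 finite_sums_le)

lemma coords_in_l1: "coords x \<in> l1_space G"
proof -
  have "(\<lambda>v. \<bar>coords x v\<bar>) summable_on G \<longleftrightarrow> (\<lambda>v. \<bar>f v x\<bar>) summable_on G"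
    by (rule summable_on_cong) (simp add: coords_def)
  then show ?thesis using abs_coords_summable by (simp add: l1_space_def coords_def)
qed

lemma l1_norm_coords_le: "l1_norm G (coords x) \<le> norm x"
proof -
  have "l1_norm G (coords x) = (\<Sum>\<^sub>\<infinity>v\<in>G. \<bar>f v x\<bar>)"
    unfolding l1_norm_def coords_def by (rule infsum_cong) simp
  also have "\<dots> \<le> norm x"
    by (rule infsum_le_finite_sums[OF abs_coords_summable finite_sums_le])
  finally show ?thesis .
qed

lemma coords_add: "coords (x + y) = (\<lambda>v. coords x v + coords y v)"
  by (auto simp: coords_def linear_add[OF coordinate_linear])

lemma coords_scale: "coords (c *\<^sub>R x) = (\<lambda>v. c * coords x v)"
  by (auto simp: coords_def linear_scale[OF coordinate_linear])

text \<open>Since the vectors of G have norm one, an l1 coefficient family gives an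
  absolutely summable series; this is where completeness is used.\<close>

lemma synth_abs_summable:
  assumes "a \<in> l1_space G" shows "(\<lambda>v. a v *\<^sub>R v) abs_summable_on G"
proof -
  have "(\<lambda>v. norm (a v *\<^sub>R v)) summable_on G \<longleftrightarrow> (\<lambda>v. \<bar>a v\<bar>) summable_on G"
    by (rule summable_on_cong) (simp add: unit)
  then show ?thesis using assms by (simp add: l1_space_def)
qed

lemma norm_synth_le:
  assumes a: "a \<in> l1_space G" shows "norm (synth a) \<le> l1_norm G a"
proof -
  have "norm (synth a) \<le> (\<Sum>\<^sub>\<infinity>v\<in>G. norm (a v *\<^sub>R v))"
    unfolding synth_def by (rule norm_infsum_bound[OF synth_abs_summable[OF a]])
  also have "\<dots> = l1_norm G a"
    unfolding l1_norm_def by (rule infsum_cong) (simp add: unit)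
  finally show ?thesis .
qed

lemma synth_add:
  assumes "a \<in> l1_space G" "b \<in> l1_space G"
  shows "synth (\<lambda>v. a v + b v) = synth a + synth b"
  using infsum_add[OF abs_summable_summable[OF synth_abs_summable[OF assms(1)]]
                      abs_summable_summable[OF synth_abs_summable[OF assms(2)]]]
  by (simp add: synth_def scaleR_add_left)

lemma synth_scale: "synth (\<lambda>v. c * a v) = c *\<^sub>R synth a"
  using infsum_scaleR_right[of c "\<lambda>v. a v *\<^sub>R v" G] by (simp add: synth_def)

text \<open>Coordinates of a synthesised vector: the coordinate functionals commute with
  the infinite sum, and biorthogonality picks out a single term.\<close>

lemma coords_synth:
  assumes a: "a \<in> l1_space G" shows "coords (synth a) = a"
proof
  fix w show "coords (synth a) w = a w"
  proof (cases "w \<in> G")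
    case w: True
    have "((\<lambda>v. f w (a v *\<^sub>R v)) has_sum f w (synth a)) G"
      unfolding synth_def
      by (rule has_sum_bounded_linear[OF coordinate_bounded_linear[OF w]])
         (use abs_summable_summable[OF synth_abs_summable[OF a]] in simp)
    then have "f w (synth a) = (\<Sum>\<^sub>\<infinity>v\<in>G. a v * f w v)"
      by (simp add: infsumI linear_scale[OF coordinate_linear[OF w]])
    also have "\<dots> = a w"
      by (subst infsum_single_point[OF w]) (simp_all add: biorthogonal w)
    finally show ?thesis using w by (simp add: coords_def)
  next
    case False
    then show ?thesis using a by (simp add: coords_def l1_space_def)
  qed
qed

text \<open>Conversely synth (coords x) = x: the fixed points of the bounded linear map
  x \<mapsto> synth (coords x) form a closed subspace containing G, hence everything.\<close>

lemma synth_coords: "synth (coords x) = x"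
proof -
  let ?R = "\<lambda>x. synth (coords x)"
  have R: "bounded_linear ?R"
  proof (rule bounded_linear_intro[where K=1])
    show "?R (x + y) = ?R x + ?R y" for x y
      unfolding coords_add by (rule synth_add[OF coords_in_l1 coords_in_l1])
    show "?R (r *\<^sub>R x) = r *\<^sub>R ?R x" for r x
      unfolding coords_scale by (rule synth_scale)
    show "norm (?R x) \<le> norm x * 1" for x
      using order_trans[OF norm_synth_le[OF coords_in_l1] l1_norm_coords_le] by simp
  qed
  let ?M = "{x. ?R x = x}"
  have "closed ?M"
    by (rule closed_Collect_eq) (auto intro!: continuous_intros bounded_linear.continuous_on[OF R])
  moreover have "subspace ?M"
    using linear_add[OF bounded_linear.linear[OF R]] linear_scale[OF bounded_linear.linear[OF R]]
      linear_0[OF bounded_linear.linear[OF R]]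
    by (auto simp: subspace_def)
  moreover have "G \<subseteq> ?M"
  proof
    fix v assume v: "v \<in> G"
    have "?R v = (\<Sum>\<^sub>\<infinity>w\<in>G. f w v *\<^sub>R w)"
      unfolding synth_def coords_def by (rule infsum_cong) simp
    also have "\<dots> = v"
      by (subst infsum_single_point[OF v]) (simp_all add: biorthogonal v)
    finally show "v \<in> ?M" by simp
  qed
  ultimately have "x \<in> ?M" by (rule total)
  then show ?thesis by simp
qed

theorem isometrically_isomorphic: "isometrically_isomorphic_l1 TYPE('a) G"
  unfolding isometrically_isomorphic_l1_def
proof (intro exI[of _ coords] conjI allI)
  show "coords (x + y) = (\<lambda>i. coords x i + coords y i)" for x y by (rule coords_add)
  show "coords (c *\<^sub>R x) = (\<lambda>i. c * coords x i)" for c x by (rule coords_scale)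
  show "bij_betw coords UNIV (l1_space G)"
    by (rule bij_betw_byWitness[where f'=synth])
       (auto simp: synth_coords coords_synth coords_in_l1)
  show "l1_norm G (coords x) = norm x" for x
    using l1_norm_coords_le[of x] norm_synth_le[OF coords_in_l1, of x]
    by (simp add: synth_coords)
qed

end

subsection \<open>The functionals attached to a strong atom\<close>

locale strong_atom_vector =
  fixes u :: "'a::real_normed_vector"
  assumes strong_atom: "strong_atom u"
begin

lemma norm_u: "norm u = 1"
  using strong_atom by (simp add: strong_atom_def)

lemma u_nonzero: "u \<noteq> 0"
  using norm_u by auto

definition atom_proj :: "'a \<Rightarrow> 'a" where
  "atom_proj = (SOME P. isometric_reflection_projection P (span {u}))"

definition coord :: "'a \<Rightarrow> real" where
  "coord x = (SOME c. atom_proj x = c *\<^sub>R u)"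

lemma atom_proj: "isometric_reflection_projection atom_proj (span {u})"
  using strong_atom unfolding strong_atom_def isometric_reflection_subspace_def atom_proj_def
  by (metis someI_ex)

lemma atom_proj_idem: "atom_proj (atom_proj x) = atom_proj x"
  using atom_proj by (simp add: isometric_reflection_projection_def)

lemma atom_proj_coord: "atom_proj x = coord x *\<^sub>R u"
proof -
  have "atom_proj x \<in> span {u}"
    using atom_proj by (auto simp: isometric_reflection_projection_def)
  then have "\<exists>c. atom_proj x = c *\<^sub>R u" by (auto simp: span_singleton)
  then show ?thesis unfolding coord_def by (rule someI_ex)
qed

lemma coord_unique: "atom_proj x = c *\<^sub>R u \<Longrightarrow> coord x = c"
  using atom_proj_coord[of x] u_nonzero by (metis scaleR_cancel_right)

lemma abs_coord_le: "\<bar>coord x\<bar> \<le> norm x"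
  using isometric_reflection_projection_norm_le[OF atom_proj, of x] atom_proj_coord[of x] norm_u
  by simp

lemma coord_bounded_linear: "bounded_linear coord"
proof (rule bounded_linear_intro[where K=1])
  have l: "linear atom_proj"
    using atom_proj bounded_linear.linear by (auto simp: isometric_reflection_projection_def)
  show "coord (x + y) = coord x + coord y" for x y
    using linear_add[OF l, of x y] by (intro coord_unique) (simp add: atom_proj_coord scaleR_add_left)
  show "coord (r *\<^sub>R x) = r *\<^sub>R coord x" for r x
    using linear_scale[OF l, of r x] by (intro coord_unique) (simp add: atom_proj_coord)
  show "norm (coord x) \<le> norm x * 1" for x
    using abs_coord_le by simp
qed

lemma coord_u: "coord u = 1"
proof -
  have "u \<in> range atom_proj"
    using atom_proj by (simp add: isometric_reflection_projection_def span_base)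
  then obtain y where "atom_proj y = u" by (auto simp: eq_commute)
  then have "atom_proj u = u" using atom_proj_idem[of y] by simp
  then show ?thesis by (intro coord_unique) simp
qed

text \<open>The heart of the argument: a rotated copy of u is either a multiple of u or
  invisible to coord, because conjugating atom_proj by the rotation gives an
  isometric reflection projection, which must fix u or kill it.\<close>

lemma rotated_atom_cases:
  assumes S: "rotation S"
  shows "coord (S u) = 0 \<or> S u = coord (S u) *\<^sub>R u"
proof -
  have "isometric_reflection_projection (\<lambda>x. inv S (atom_proj (S x))) (S -` span {u})"
    by (rule isometric_reflection_projection_conj[OF atom_proj S])
  then have "inv S (atom_proj (S u)) = u \<or> inv S (atom_proj (S u)) = 0"
    using strong_atom unfolding strong_atom_def by blast
  then have "atom_proj (S u) = S u \<or> atom_proj (S u) = 0"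
    using rotation_inv_right[OF S] linear_0[OF rotation_linear[OF S]] by metis
  then show ?thesis
    using atom_proj_coord[of "S u"] u_nonzero by auto
qed

definition orbit :: "'a set" where
  "orbit = {T u | T. rotation T}"

definition orbit_rotation :: "'a \<Rightarrow> 'a \<Rightarrow> 'a" where
  "orbit_rotation v = (SOME T. rotation T \<and> T u = v)"

lemma orbit_rotation:
  assumes "v \<in> orbit" shows "rotation (orbit_rotation v)" "orbit_rotation v u = v"
proof -
  have "\<exists>T. rotation T \<and> T u = v" using assms by (auto simp: orbit_def)
  then have "rotation (orbit_rotation v) \<and> orbit_rotation v u = v"
    unfolding orbit_rotation_def by (rule someI_ex)
  then show "rotation (orbit_rotation v)" "orbit_rotation v u = v" by auto
qed

lemma orbit_norm: "v \<in> orbit \<Longrightarrow> norm v = 1"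
  using norm_u by (auto simp: orbit_def rotation_norm)

lemma orbit_uminus: "v \<in> orbit \<Longrightarrow> - v \<in> orbit"
  unfolding orbit_def using rotation_uminus by fastforce

definition func :: "'a \<Rightarrow> 'a \<Rightarrow> real" where
  "func v x = coord (inv (orbit_rotation v) x)"

lemma func_bounded_linear: "v \<in> orbit \<Longrightarrow> bounded_linear (func v)"
  unfolding func_def
  using bounded_linear_compose[OF coord_bounded_linear
          rotation_bounded_linear[OF rotation_inv[OF orbit_rotation(1)]]]
  by blast

lemma abs_func_le:
  assumes "v \<in> orbit" shows "\<bar>func v x\<bar> \<le> norm x"
  using abs_coord_le[of "inv (orbit_rotation v) x"]
    rotation_norm[OF rotation_inv[OF orbit_rotation(1)[OF assms]]]
  by (simp add: func_def)

lemma func_self: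
  assumes "v \<in> orbit" shows "func v v = 1"
  using orbit_rotation[OF assms] coord_u
  by (metis func_def rotation_inv_left)

lemma func_orbit_nonzero:
  assumes v: "v \<in> orbit" and w: "w \<in> orbit" and nz: "func v w \<noteq> 0"
  shows "w = v \<or> w = - v"
proof -
  obtain T where T: "rotation T" "w = T u" using w by (auto simp: orbit_def)
  let ?R = "orbit_rotation v"
  have R: "rotation ?R" "?R u = v" using orbit_rotation[OF v] by auto
  let ?S = "\<lambda>x. inv ?R (T x)"
  have S: "rotation ?S" by (rule rotation_comp[OF rotation_inv[OF R(1)] T(1)])
  have "coord (?S u) = func v w" by (simp add: func_def T)
  then have "?S u = func v w *\<^sub>R u" using rotated_atom_cases[OF S] nz by auto
  then have "?R (?S u) = func v w *\<^sub>R v"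
    using R by (simp add: linear_scale[OF rotation_linear[OF R(1)]])
  then have wv: "w = func v w *\<^sub>R v" by (simp add: rotation_inv_right[OF R(1)] T)
  then have "\<bar>func v w\<bar> = 1" using orbit_norm[OF v] orbit_norm[OF w] by (metis norm_scaleR mult.right_neutral)
  then show ?thesis using wv by (cases "func v w \<ge> 0") auto
qed

definition antipodal_rep :: "'a \<Rightarrow> 'a" where
  "antipodal_rep v = (SOME w. w \<in> {v, - v})"

lemma antipodal_rep: "antipodal_rep v = v \<or> antipodal_rep v = - v"
proof -
  have "antipodal_rep v \<in> {v, - v}" unfolding antipodal_rep_def by (rule someI_ex) auto
  then show ?thesis by auto
qed

lemma antipodal_rep_uminus: "antipodal_rep (- v) = antipodal_rep v"
  by (simp add: antipodal_rep_def insert_commute)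

definition half :: "'a set" where
  "half = {v \<in> orbit. antipodal_rep v = v}"

lemma half_orbit: "v \<in> half \<Longrightarrow> v \<in> orbit"
  by (simp add: half_def)

lemma half_cover: assumes "v \<in> orbit" shows "v \<in> half \<or> - v \<in> half"
  using antipodal_rep[of v] antipodal_rep_uminus[of v] assms orbit_uminus[OF assms]
  by (auto simp: half_def)

lemma half_antipodal_free: assumes "v \<in> half" "- v \<in> half" shows False
proof -
  have "v = - v"
    using assms antipodal_rep_uminus[of v] by (simp add: half_def)
  then have "v = 0" by (simp add: eq_neg_iff_add_eq_0 flip: scaleR_2)
  then show False using orbit_norm[OF half_orbit[OF assms(1)]] by simp
qed

lemma func_half_nonzero:
  assumes "v \<in> half" "w \<in> orbit" "func v w \<noteq> 0" shows "w = v \<or> w = - v"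
  using func_orbit_nonzero[OF half_orbit] assms by blast

lemma func_biorthogonal:
  assumes v: "v \<in> half" and w: "w \<in> half"
  shows "func v w = (if w = v then 1 else 0)"
proof (cases "w = v")
  case True then show ?thesis using func_self[OF half_orbit[OF v]] by simp
next
  case False
  then have "func v w = 0"
    using func_half_nonzero[OF v half_orbit[OF w]] half_antipodal_free v w by auto
  then show ?thesis using False by simp
qed

text \<open>A point of the orbit is seen by at most one functional of the half, and
  only with coefficient of modulus at most one; so signed sums of these
  functionals are bounded by one on the orbit.\<close>

lemma abs_sum_func_orbit_le:
  assumes F: "finite F" "F \<subseteq> half" and w: "w \<in> orbit" and c: "\<And>v. \<bar>c v\<bar> \<le> 1"
  shows "\<bar>\<Sum>v\<in>F. c v * func v w\<bar> \<le> 1"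
proof (cases "\<exists>v0\<in>F. func v0 w \<noteq> 0")
  case True
  then obtain v0 where v0: "v0 \<in> F" "func v0 w \<noteq> 0" by blast
  have "func v w = 0" if "v \<in> F - {v0}" for v
  proof (rule ccontr)
    assume "func v w \<noteq> 0"
    moreover have "w = v0 \<or> w = - v0" using func_half_nonzero[OF _ w] v0 F by blast
    ultimately have "w = v \<or> w = - v" "w = v0 \<or> w = - v0"
      using func_half_nonzero[OF _ w] that F by blast+
    then have "v = v0 \<or> v = - v0" by auto
    then show False using that F v0 half_antipodal_free by auto
  qed
  then have "(\<Sum>v\<in>F. c v * func v w) = c v0 * func v0 w"
    by (simp add: sum.remove[OF F(1) v0(1)])
  also have "\<bar>\<dots>\<bar> \<le> 1 * 1"
    unfolding abs_mult using c abs_func_le[of v0 w] orbit_norm[OF w] v0 F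
    by (intro mult_mono) (auto dest: half_orbit)
  finally show ?thesis by simp
qed simp

end

subsection \<open>Strong atoms that are big points\<close>

locale strong_atom_big_point = strong_atom_vector u for u :: "'a::banach" +
  assumes big_point: "big_point u"
begin

text \<open>The coordinate sums are bounded by the norm: the functional
  sum over F of sgn(func v x) func v is bounded by one on the orbit, hence
  (the orbit being norming) everywhere by the norm.\<close>

lemma finite_sums_func_le:
  assumes F: "finite F" "F \<subseteq> half" shows "(\<Sum>v\<in>F. \<bar>func v x\<bar>) \<le> norm x"
proof -
  define h where "h y = (\<Sum>v\<in>F. sgn (func v x) * func v y)" for y
  have "bounded_linear h"
    unfolding h_def using F
    by (intro bounded_linear_sum bounded_linear_const_mult func_bounded_linear)
       (auto dest: half_orbit)
  moreover have "\<bar>h (T u)\<bar> \<le> 1" if "rotation T" for T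
    unfolding h_def using that
    by (intro abs_sum_func_orbit_le[OF F]) (auto simp: orbit_def abs_sgn_eq)
  ultimately have "\<bar>h x\<bar> \<le> norm x"
    by (rule big_point_functional_bound[OF big_point])
  moreover have "h x = (\<Sum>v\<in>F. \<bar>func v x\<bar>)"
    unfolding h_def by (intro sum.cong) (auto simp: sgn_real_def)
  ultimately show ?thesis by simp
qed

text \<open>The half of the orbit is total, since the whole orbit is and a subspace
  containing v contains -v.\<close>

lemma half_total:
  assumes M: "closed M" "subspace M" "half \<subseteq> M" shows "x \<in> M"
proof (rule big_point_total[OF big_point M(1,2)])
  fix T :: "'a \<Rightarrow> 'a" assume "rotation T"
  then have "T u \<in> orbit" by (auto simp: orbit_def)
  then show "T u \<in> M"
    using half_cover M(2,3) subspace_neg by fastforce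
qed

sublocale l1_basis half func
proof (rule l1_basis.intro)
  show "\<And>v. v \<in> half \<Longrightarrow> norm v = 1"
    using orbit_norm half_orbit by blast
  show "\<And>v. v \<in> half \<Longrightarrow> bounded_linear (func v)"
    using func_bounded_linear half_orbit by blast
qed (simp_all add: func_biorthogonal finite_sums_func_le half_total)

end

theorem theorem4p1:
  fixes u :: "'a::banach"
  assumes "strong_atom u" and "big_point u"
  shows "\<exists>\<Gamma> :: 'a set. isometrically_isomorphic_l1 TYPE('a) \<Gamma>"
proof -
  interpret strong_atom_big_point u
    using assms by unfold_locales
  show ?thesis using isometrically_isomorphic by blast
qed

end
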